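(* Let $f:[0,+\infty)\to[0,1]$ be defined by $f(u\tanh u)=u^{-1}\tanh u$ for $u>0$ and $f(0)=1$. Then for every fixed $\alpha>0$ the function $\phi(t)=t\,\alpha\, f(t/\alpha)$, $t>0$, is differentiable and monotone increasing, and $\phi(t)\to\alpha^2$ as $t\to+\infty$. *)

theory Defs
  imports Complex_Main
begin

text \<open>The function f on [0,+infinity) determined by f(u tanh u) = tanh u / u for u > 0
  and f 0 = 1 (u tanh u is a bijection of (0,+infinity) onto itself).
  Values at negative arguments are irrelevant and set to 0.\<close>
definition ftanh :: "real \<Rightarrow> real" where
  "ftanh x = (if x = 0 then 1
              else if x > 0 then (THE y. \<exists>u>0. u * tanh u = x \<and> y = tanh u / u)
              else 0)"

end

theory Submission
  imports Defs
begin

text \<open>Let \<open>h(u) = u tanh u\<close>: a continuous, strictly increasing bijection of \<open>(0,\<infinity>)\<close>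
  whose inverse is differentiable because \<open>h' > 0\<close>. Substituting \<open>x = h(u)\<close> in the definition
  of \<open>f\<close> gives \<open>x f(x) = tanh\<^sup>2 (h\<^sup>-\<^sup>1 x)\<close>, which is therefore differentiable and increasing
  on \<open>(0,\<infinity>)\<close> and tends to \<open>1\<close> since \<open>h\<^sup>-\<^sup>1 x \<ge> x\<close>. The claims about \<open>\<phi>\<close> follow from
  \<open>\<phi>(t) = \<alpha>\<^sup>2 (t/\<alpha>) f(t/\<alpha>)\<close>.\<close>

definition xtanh :: "real \<Rightarrow> real" where
  "xtanh u = u * tanh u"

lemma xtanh_strict_mono_on: "strict_mono_on {0..} xtanh"
proof (rule strict_mono_onI)
  fix a b :: real assume "a \<in> {0..}" "b \<in> {0..}" "a < b"
  then have "a * tanh a \<le> a * tanh b" by (intro mult_left_mono) auto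
  also have "\<dots> < b * tanh b" using \<open>a \<in> {0..}\<close> \<open>a < b\<close> by (intro mult_strict_right_mono) auto
  finally show "xtanh a < xtanh b" by (simp add: xtanh_def)
qed

lemma xtanh_inj_on: "inj_on xtanh {0..}"
  using xtanh_strict_mono_on by (rule strict_mono_on_imp_inj_on)

lemma isCont_xtanh: "isCont xtanh u"
  unfolding xtanh_def by (intro continuous_intros) auto

lemma xtanh_has_field_derivative:
  "(xtanh has_field_derivative tanh u + u * (1 - tanh u ^ 2)) (at u)"
  unfolding xtanh_def by (auto intro!: derivative_eq_intros)

lemma xtanh_surj: assumes "0 < x" shows "\<exists>u>0. xtanh u = x"
proof -
  define b where "b = x / tanh 1 + 1"
  have "tanh (1::real) > 0" by simp
  then have "b \<ge> 1" using assms by (simp add: b_def)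
  have "x \<le> b * tanh 1" using \<open>tanh 1 > 0\<close> by (simp add: b_def field_simps)
  also have "b * tanh 1 \<le> xtanh b" using \<open>b \<ge> 1\<close> by (auto simp: xtanh_def intro!: mult_left_mono)
  finally obtain u where "0 \<le> u" "xtanh u = x"
    using IVT[of xtanh 0 x b] \<open>b \<ge> 1\<close> assms isCont_xtanh by (auto simp: xtanh_def)
  moreover from this have "u \<noteq> 0" using assms by (auto simp: xtanh_def)
  ultimately show ?thesis by (intro exI[of _ u]) simp
qed

definition xtanh_inv :: "real \<Rightarrow> real" where
  "xtanh_inv x = (THE u. u > 0 \<and> xtanh u = x)"

lemma xtanh_inv_eqI: assumes "u > 0" "xtanh u = x" shows "xtanh_inv x = u"
  unfolding xtanh_inv_def
  by (rule the_equality) (use assms inj_onD[OF xtanh_inj_on] in auto)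

lemma xtanh_inv_pos: "0 < x \<Longrightarrow> xtanh_inv x > 0"
  and xtanh_xtanh_inv: "0 < x \<Longrightarrow> xtanh (xtanh_inv x) = x"
  using xtanh_surj xtanh_inv_eqI by blast+

lemma xtanh_inv_xtanh: "0 < u \<Longrightarrow> xtanh_inv (xtanh u) = u"
  by (rule xtanh_inv_eqI) auto

lemma xtanh_inv_ge: assumes "0 < x" shows "x \<le> xtanh_inv x"
proof -
  have "x = xtanh_inv x * tanh (xtanh_inv x)"
    using xtanh_xtanh_inv[OF assms] by (simp add: xtanh_def)
  also have "\<dots> \<le> xtanh_inv x"
    using xtanh_inv_pos[OF assms] tanh_real_lt_1[of "xtanh_inv x"] by (simp add: mult_left_le)
  finally show ?thesis .
qed

lemma xtanh_inv_mono: assumes "0 < x" "x \<le> y" shows "xtanh_inv x \<le> xtanh_inv y"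
  using assms xtanh_xtanh_inv[of x] xtanh_xtanh_inv[of y] xtanh_inv_pos[of x] xtanh_inv_pos[of y]
    strict_mono_onD[OF xtanh_strict_mono_on, of "xtanh_inv y" "xtanh_inv x"]
  by (cases "xtanh_inv x \<le> xtanh_inv y") auto

lemma isCont_xtanh_inv: assumes "0 < x" shows "isCont xtanh_inv x"
proof -
  have "isCont xtanh_inv (xtanh (xtanh_inv x))"
  proof (rule isCont_inverse_function[where d = "xtanh_inv x / 2" and f = xtanh and x = "xtanh_inv x"])
    fix z assume "\<bar>z - xtanh_inv x\<bar> \<le> xtanh_inv x / 2"
    then have "z > 0" using xtanh_inv_pos[OF assms] by linarith
    then show "xtanh_inv (xtanh z) = z" by (rule xtanh_inv_xtanh)
  qed (use xtanh_inv_pos[OF assms] isCont_xtanh in auto)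
  then show ?thesis using xtanh_xtanh_inv[OF assms] by simp
qed

lemma xtanh_inv_differentiable: assumes "0 < x" shows "xtanh_inv differentiable (at x)"
proof -
  define u where "u = xtanh_inv x"
  have "u > 0" using xtanh_inv_pos[OF assms] by (simp add: u_def)
  have "tanh u ^ 2 < 1"
    using tanh_real_lt_1[of u] \<open>u > 0\<close> by (simp add: power_less_one_iff)
  then have "tanh u + u * (1 - tanh u ^ 2) > 0"
    using \<open>u > 0\<close> by (simp add: add_pos_nonneg)
  have "(xtanh_inv has_field_derivative inverse (tanh u + u * (1 - tanh u ^ 2))) (at x)"
  proof (rule DERIV_inverse_function[where a = 0 and b = "x + 1"])
    show "(xtanh has_field_derivative tanh u + u * (1 - tanh u ^ 2)) (at (xtanh_inv x))"
      unfolding u_def by (rule xtanh_has_field_derivative)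
  qed (use assms \<open>tanh u + u * (1 - tanh u ^ 2) > 0\<close> xtanh_xtanh_inv isCont_xtanh_inv in auto)
  then show ?thesis using real_differentiable_def by blast
qed

lemma x_ftanh_eq: assumes "0 < x" shows "x * ftanh x = tanh (xtanh_inv x) ^ 2"
proof -
  define u where "u = xtanh_inv x"
  have u: "u > 0" "xtanh u = x"
    using xtanh_inv_pos[OF assms] xtanh_xtanh_inv[OF assms] by (auto simp: u_def)
  have "ftanh x = tanh u / u"
    unfolding ftanh_def using assms
  proof (simp, intro the_equality)
    fix y assume "\<exists>v>0. v * tanh v = x \<and> y = tanh v / v"
    then show "y = tanh u / u" using xtanh_inv_eqI unfolding u_def xtanh_def by metis
  qed (use u in \<open>auto simp: xtanh_def\<close>)
  then have "x * ftanh x = tanh u ^ 2"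
    using u by (auto simp flip: u(2) simp: xtanh_def power2_eq_square)
  then show ?thesis by (simp add: u_def)
qed

lemma x_ftanh_differentiable:
  assumes "0 < x" shows "(\<lambda>y. y * ftanh y) differentiable (at x)"
proof -
  obtain D where "(xtanh_inv has_real_derivative D) (at x)"
    using xtanh_inv_differentiable[OF assms] real_differentiable_def by blast
  then have "((\<lambda>y. tanh (xtanh_inv y) ^ 2) has_real_derivative
      2 * tanh (xtanh_inv x) * ((1 - tanh (xtanh_inv x) ^ 2) * D)) (at x)"
    by (auto intro!: derivative_eq_intros)
  then have "((\<lambda>y. y * ftanh y) has_real_derivative
      2 * tanh (xtanh_inv x) * ((1 - tanh (xtanh_inv x) ^ 2) * D)) (at x)"
    by (rule has_field_derivative_transform_within_open[where S = "{0<..}"])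
       (use assms x_ftanh_eq in auto)
  then show ?thesis using real_differentiable_def by blast
qed

lemma x_ftanh_mono_on: "mono_on {0<..} (\<lambda>x. x * ftanh x)"
proof (rule mono_onI)
  fix x y :: real assume "x \<in> {0<..}" "y \<in> {0<..}" "x \<le> y"
  then have "tanh (xtanh_inv x) \<le> tanh (xtanh_inv y)" "0 \<le> tanh (xtanh_inv x)"
    using xtanh_inv_mono xtanh_inv_pos[of x] by auto
  then show "x * ftanh x \<le> y * ftanh y"
    using \<open>x \<in> {0<..}\<close> \<open>y \<in> {0<..}\<close> by (simp add: x_ftanh_eq power_mono)
qed

lemma x_ftanh_tendsto_at_top: "((\<lambda>x. x * ftanh x) \<longlongrightarrow> 1) at_top"
proof -
  have "filterlim xtanh_inv at_top at_top"
    by (rule filterlim_at_top_mono[OF filterlim_ident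
          eventually_mono[OF eventually_gt_at_top[of 0] xtanh_inv_ge]])
  then have "((\<lambda>x. tanh (xtanh_inv x)) \<longlongrightarrow> 1) at_top"
    by (rule filterlim_compose[OF tanh_real_at_top])
  then have "((\<lambda>x. tanh (xtanh_inv x) ^ 2) \<longlongrightarrow> 1) at_top"
    by (metis power_one tendsto_power)
  then show ?thesis
    by (rule Lim_transform_eventually)
       (simp add: x_ftanh_eq eventually_mono[OF eventually_gt_at_top[of 0]])
qed

theorem proposition3p5:
  fixes \<alpha> :: real
  assumes "\<alpha> > 0"
  defines "\<phi> \<equiv> (\<lambda>t::real. t * \<alpha> * ftanh (t / \<alpha>))"
  shows "(\<forall>t>0. \<phi> differentiable (at t))
         \<and> mono_on {0<..} \<phi>
         \<and> (\<phi> \<longlongrightarrow> \<alpha>\<^sup>2) at_top"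
proof -
  have \<phi>_eq: "\<phi> = (\<lambda>t. \<alpha>\<^sup>2 * ((t / \<alpha>) * ftanh (t / \<alpha>)))"
    using assms by (auto simp: \<phi>_def power2_eq_square)
  have "\<phi> differentiable (at t)" if "t > 0" for t
    unfolding \<phi>_eq using assms that
    by (intro differentiable_mult differentiable_const differentiable_compose[OF x_ftanh_differentiable])
       (auto intro!: derivative_intros)
  moreover have "mono_on {0<..} \<phi>"
    unfolding \<phi>_eq using assms
    by (intro mono_onI mult_left_mono mono_onD[OF x_ftanh_mono_on]) (auto simp: divide_right_mono)
  moreover have "filterlim (\<lambda>t. t / \<alpha>) at_top at_top"
    using filterlim_at_top_mult_tendsto_pos[OF tendsto_const[of "1 / \<alpha>"] _ filterlim_ident] assms
    by simp
  then have "(\<phi> \<longlongrightarrow> \<alpha>\<^sup>2 * 1) at_top"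
    unfolding \<phi>_eq by (intro tendsto_mult tendsto_const filterlim_compose[OF x_ftanh_tendsto_at_top])
  ultimately show ?thesis by simp
qed

end
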